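(* Let $p$ be a prime, $d\in\mathbb{N}_{+}$, $V$ a subspace of $\mathbb{F}_{p}^{d}$, and $V_{1},\dots,V_{N}$ linearly independent subspaces of $\mathbb{F}_{p}^{d}$. If $N\geq\dim(V)+2$, then $\bigcap_{i=1}^{N}(V+V_{i})=V$.
   Context: Subspaces $V_{1},\dots,V_{N}$ are linearly independent if whenever $v_{i}\in V_{i}$ and $\sum_{i}v_{i}=\mathbf0$, all $v_{i}=\mathbf0$. *)

theory Defs
  imports "HOL-Analysis.Analysis"
begin

definition subspace_plus :: "('a::field ^ 'd) set \<Rightarrow> ('a ^ 'd) set \<Rightarrow> ('a ^ 'd) set" where
  "subspace_plus V W = {v + w | v w. v \<in> V \<and> w \<in> W}"

definition lin_indep_subspaces :: "nat \<Rightarrow> (nat \<Rightarrow> ('a::field ^ 'd) set) \<Rightarrow> bool" where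
  "lin_indep_subspaces N Vs \<longleftrightarrow>
     (\<forall>v. (\<forall>i\<in>{1..N}. v i \<in> Vs i) \<and> (\<Sum>i=1..N. v i) = 0 \<longrightarrow> (\<forall>i\<in>{1..N}. v i = 0))"

end

theory Submission
  imports Defs
begin

text \<open>Write \<open>x \<in> \<Inter>\<^sub>i (V + V\<^sub>i)\<close> as \<open>x = u\<^sub>i + w\<^sub>i\<close> with \<open>u\<^sub>i \<in> V\<close>, \<open>w\<^sub>i \<in> V\<^sub>i\<close>. Fixing an
  index \<open>k\<close>, the \<open>N - 1 > dim V\<close> differences \<open>w\<^sub>i - w\<^sub>k = u\<^sub>k - u\<^sub>i\<close> lie in \<open>V\<close>, so some
  nontrivial combination \<open>\<Sum>\<^sub>i c\<^sub>i (w\<^sub>i - w\<^sub>k)\<close> vanishes. Read as a vanishing sum of elements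
  of the independent subspaces \<open>V\<^sub>i\<close>, it forces \<open>c\<^sub>i w\<^sub>i = 0\<close>; for an \<open>i\<close> with \<open>c\<^sub>i \<noteq> 0\<close> this
  gives \<open>w\<^sub>i = 0\<close>, hence \<open>x = u\<^sub>i \<in> V\<close>.\<close>

lemma (in finite_dimensional_vector_space) nontrivial_relation_card_gt_dim:
  assumes "finite I" and "z ` I \<subseteq> V" and "dim V < card I"
  shows "\<exists>c. (\<Sum>i\<in>I. scale (c i) (z i)) = 0 \<and> (\<exists>i\<in>I. c i \<noteq> 0)"
proof (cases "inj_on z I")
  case False
  then obtain i j where ij: "i \<in> I" "j \<in> I" "i \<noteq> j" "z i = z j"
    unfolding inj_on_def by blast
  define c :: "_ \<Rightarrow> 'a" where "c k = (if k = i then 1 else if k = j then -1 else 0)" for k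
  have "(\<Sum>k\<in>I. scale (c k) (z k)) = (\<Sum>k\<in>I. if k = i then z i else 0) - (\<Sum>k\<in>I. if k = j then z j else 0)"
    unfolding sum_subtractf[symmetric] using ij by (intro sum.cong) (auto simp: c_def)
  also have "\<dots> = 0"
    using ij \<open>finite I\<close> by simp
  finally show ?thesis
    using ij by (intro exI[of _ c]) (auto simp: c_def)
next
  case True
  then have "card (z ` I) = card I"
    by (rule card_image)
  then have "dependent (z ` I)"
    using independent_card_le_dim[OF \<open>z ` I \<subseteq> V\<close>] \<open>dim V < card I\<close> by fastforce
  then obtain u where u: "(\<Sum>v\<in>z ` I. scale (u v) v) = 0" and "\<exists>v\<in>z ` I. u v \<noteq> 0"
    using dependent_finite[OF finite_imageI[OF \<open>finite I\<close>]] by blast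
  have "(\<Sum>i\<in>I. scale (u (z i)) (z i)) = 0"
    using u by (simp add: sum.reindex[OF True])
  moreover have "\<exists>i\<in>I. u (z i) \<noteq> 0"
    using \<open>\<exists>v\<in>z ` I. u v \<noteq> 0\<close> by blast
  ultimately show ?thesis
    by (intro exI[of _ "\<lambda>i. u (z i)"]) simp
qed

lemma lin_indep_subspacesD:
  assumes "lin_indep_subspaces N Vs" and "\<forall>i\<in>{1..N}. v i \<in> Vs i"
    and "(\<Sum>i\<in>{1..N}. v i) = 0" and "i \<in> {1..N}"
  shows "v i = 0"
  using assms unfolding lin_indep_subspaces_def by blast

lemma lin_indep_subspaces_relation_of_differences:
  fixes w :: "nat \<Rightarrow> 'a::field ^ 'd"
  assumes indep: "lin_indep_subspaces N Vs"
    and subspaces: "\<forall>i\<in>{1..N}. vec.subspace (Vs i)"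
    and w: "\<forall>i\<in>{1..N}. w i \<in> Vs i"
    and k: "k \<in> {1..N}"
    and relation: "(\<Sum>i\<in>{1..N} - {k}. c i *s (w i - w k)) = 0"
    and j: "j \<in> {1..N} - {k}"
  shows "c j *s w j = 0"
proof -
  define a where "a = c(k := - (\<Sum>i\<in>{1..N} - {k}. c i))"
  have "(\<Sum>i\<in>{1..N}. a i *s w i) = a k *s w k + (\<Sum>i\<in>{1..N} - {k}. a i *s w i)"
    using k by (simp add: sum.remove)
  also have "\<dots> = (\<Sum>i\<in>{1..N} - {k}. c i *s (w i - w k))"
    by (simp add: a_def vec.scale_sum_left vec.scale_right_diff_distrib sum_subtractf)
  finally have "(\<Sum>i\<in>{1..N}. a i *s w i) = 0"
    using relation by simp
  moreover have "\<forall>i\<in>{1..N}. a i *s w i \<in> Vs i"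
    using subspaces w by (auto intro: vec.subspace_scale)
  ultimately have "a j *s w j = 0"
    using j by (intro lin_indep_subspacesD[OF indep, of "\<lambda>i. a i *s w i"]) auto
  then show ?thesis
    using j by (simp add: a_def)
qed

lemma subset_subspace_plus:
  assumes "vec.subspace W"
  shows "V \<subseteq> subspace_plus V W"
  using vec.subspace_0[OF assms] unfolding subspace_plus_def by force

lemma Inter_subspace_plus_subset:
  fixes V :: "('a::field ^ 'd) set"
  assumes V: "vec.subspace V"
    and subspaces: "\<forall>i\<in>{1..N}. vec.subspace (Vs i)"
    and indep: "lin_indep_subspaces N Vs"
    and N: "N \<ge> vec.dim V + 2"
  shows "(\<Inter>i\<in>{1..N}. subspace_plus V (Vs i)) \<subseteq> V"
proof
  fix x
  assume "x \<in> (\<Inter>i\<in>{1..N}. subspace_plus V (Vs i))"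
  then have "\<forall>i\<in>{1..N}. \<exists>u w. x = u + w \<and> u \<in> V \<and> w \<in> Vs i"
    unfolding subspace_plus_def by blast
  then obtain u w where uw: "\<And>i. i \<in> {1..N} \<Longrightarrow> x = u i + w i \<and> u i \<in> V \<and> w i \<in> Vs i"
    by metis
  define I where "I = {1..N} - {1::nat}"
  have one: "1 \<in> {1..N}"
    using N by simp
  have differences_in_V: "(\<lambda>i. w i - w 1) ` I \<subseteq> V"
  proof clarify
    fix i
    assume "i \<in> I"
    then have "w i - w 1 = u 1 - u i"
      using uw[of i] uw[OF one] unfolding I_def by (simp add: algebra_simps)
    then show "w i - w 1 \<in> V"
      using \<open>i \<in> I\<close> uw[of i] uw[OF one] vec.subspace_diff[OF V] unfolding I_def by auto
  qed
  have "finite I" and "vec.dim V < card I"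
    using N by (simp_all add: I_def)
  then obtain c j where relation: "(\<Sum>i\<in>I. c i *s (w i - w 1)) = 0"
    and j: "j \<in> I" "c j \<noteq> 0"
    using vec.nontrivial_relation_card_gt_dim[OF _ differences_in_V] by blast
  have "c j *s w j = 0"
    using lin_indep_subspaces_relation_of_differences[OF indep subspaces _ one] uw relation j
    unfolding I_def by blast
  then have "w j = 0"
    using j(2) by simp
  then show "x \<in> V"
    using uw[of j] j(1) unfolding I_def by auto
qed

theorem proposition3p3:
  fixes p :: nat and V :: "('a::field ^ 'd) set" and Vs :: "nat \<Rightarrow> ('a ^ 'd) set" and N :: nat
  assumes "prime p" and "CARD('a) = p"
    and "vec.subspace V"
    and "\<forall>i\<in>{1..N}. vec.subspace (Vs i)"
    and "lin_indep_subspaces N Vs"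
    and "N \<ge> vec.dim V + 2"
  shows "(\<Inter>i\<in>{1..N}. subspace_plus V (Vs i)) = V"
proof
  show "(\<Inter>i\<in>{1..N}. subspace_plus V (Vs i)) \<subseteq> V"
    using Inter_subspace_plus_subset assms(3-6) .
  show "V \<subseteq> (\<Inter>i\<in>{1..N}. subspace_plus V (Vs i))"
    using subset_subspace_plus assms(4) by (meson INT_greatest)
qed

end
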